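(* (a) For every odd integer $n\ge 3$, the cycle $C_n$ is $\mathbb{Z}_n$-distance antimagic. (b) Let $k\ge 2$ and let $n_1,\ldots,n_k\ge 3$ be odd integers each of which divides $k-1$. Then $C_{n_1}\Box\cdots\Box C_{n_k}$ is $\mathbb{Z}_{n_1}\times\cdots\times\mathbb{Z}_{n_k}$-distance antimagic. In particular, for every odd prime $p$ and integer $d\ge 1$, the Cartesian product of $pd+1$ copies of $C_p$ is $\mathbb{Z}_p^{pd+1}$-distance antimagic.
   Context: $C_n$ is the cycle of length $n$; $\mathbb{Z}_m$ is the cyclic group of integers modulo $m$. The Cartesian product $G_1\Box\cdots\Box G_k$ has vertex set $V(G_1)\times\cdots\times V(G_k)$, with two tuples adjacent iff they differ in exactly one coordinate $i$ and are adjacent there in $G_i$. For a graph $G$ with $n$ vertices and an Abelian group $A$ of order $n$ (written additively), and a bijection $f:V(G)\to A$, the weight of $x$ is $w_f(x)=\sum_{y\in N(x)} f(y)$ computed in $A$ ($N(x)$ the open neighbourhood). $f$ is an $A$-distance antimagic labelling if all weights are pairwise distinct; $G$ is $A$-distance antimagic if it admits such a labelling. *)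

theory Defs
  imports "HOL-Algebra.Algebra" "HOL-Computational_Algebra.Primes"
begin

text \<open>A (simple) graph is given by a vertex set V and an adjacency relation E;
  only adjacencies between vertices of V are relevant.\<close>

definition open_nbhd :: "'v set \<Rightarrow> ('v \<Rightarrow> 'v \<Rightarrow> bool) \<Rightarrow> 'v \<Rightarrow> 'v set" where
  "open_nbhd V E x = {y \<in> V. E x y}"

text \<open>Weight of x under labelling f, computed in the abelian group A
  (HOL-Algebra writes the group operation multiplicatively).\<close>
definition dist_weight :: "('g, 'c) monoid_scheme \<Rightarrow> 'v set \<Rightarrow> ('v \<Rightarrow> 'v \<Rightarrow> bool) \<Rightarrow> ('v \<Rightarrow> 'g) \<Rightarrow> 'v \<Rightarrow> 'g" where
  "dist_weight A V E f x = finprod A f (open_nbhd V E x)"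

definition distance_antimagic_labelling ::
  "('g, 'c) monoid_scheme \<Rightarrow> 'v set \<Rightarrow> ('v \<Rightarrow> 'v \<Rightarrow> bool) \<Rightarrow> ('v \<Rightarrow> 'g) \<Rightarrow> bool" where
  "distance_antimagic_labelling A V E f \<longleftrightarrow>
     bij_betw f V (carrier A) \<and> inj_on (dist_weight A V E f) V"

definition distance_antimagic ::
  "('g, 'c) monoid_scheme \<Rightarrow> 'v set \<Rightarrow> ('v \<Rightarrow> 'v \<Rightarrow> bool) \<Rightarrow> bool" where
  "distance_antimagic A V E \<longleftrightarrow> (\<exists>f. distance_antimagic_labelling A V E f)"

definition cycle_V :: "nat \<Rightarrow> nat set" where
  "cycle_V n = {..<n}"

definition cycle_E :: "nat \<Rightarrow> nat \<Rightarrow> nat \<Rightarrow> bool" where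
  "cycle_E n i j \<longleftrightarrow> j = (i + 1) mod n \<or> i = (j + 1) mod n"

definition cart_V :: "'i set \<Rightarrow> ('i \<Rightarrow> 'v set) \<Rightarrow> ('i \<Rightarrow> 'v) set" where
  "cart_V I V = (\<Pi>\<^sub>E i\<in>I. V i)"

definition cart_E :: "'i set \<Rightarrow> ('i \<Rightarrow> 'v \<Rightarrow> 'v \<Rightarrow> bool) \<Rightarrow> ('i \<Rightarrow> 'v) \<Rightarrow> ('i \<Rightarrow> 'v) \<Rightarrow> bool" where
  "cart_E I E x y \<longleftrightarrow> (\<exists>i\<in>I. E i (x i) (y i) \<and> (\<forall>j\<in>I. j \<noteq> i \<longrightarrow> x j = y j))"

end

theory Submission
  imports Defs
begin

text \<open>Label every vertex by itself. In \<open>C\<^sub>n\<close> the neighbours of \<open>i\<close> are \<open>i \<plusminus> 1\<close>,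
  so the weight of \<open>i\<close> is \<open>2i\<close>. In a product of \<open>k\<close> cycles the \<open>2k\<close> neighbours of \<open>x\<close>
  are \<open>x \<plusminus> e\<^sub>i\<close>; in coordinate \<open>j\<close> they sum to \<open>2k x\<^sub>j\<close>, which is \<open>2 x\<^sub>j\<close> modulo
  \<open>n\<^sub>j\<close> because \<open>n\<^sub>j\<close> divides \<open>k - 1\<close>. So the weight of every vertex is its label
  added to itself, and doubling is injective in a group of odd order \<open>m\<close>: \<open>a\<close> is
  recovered from \<open>a \<otimes> a\<close> by raising it to the power \<open>(m + 1) / 2\<close>.\<close>

lemma (in group) inj_on_square_if_odd_order:
  assumes "odd (order G)"
  shows "inj_on (\<lambda>x. x \<otimes> x) (carrier G)"
proof (rule inj_onI)
  have root: "(x \<otimes> x) [^] ((order G + 1) div 2) = x" if x: "x \<in> carrier G" for x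
  proof -
    have "x \<otimes> x = x [^] (2::nat)" using x by (simp add: numeral_2_eq_2)
    moreover have "2 * ((order G + 1) div 2) = order G + 1" using assms by simp
    ultimately have "(x \<otimes> x) [^] ((order G + 1) div 2) = x [^] (order G + 1)"
      using x by (simp only: nat_pow_pow)
    also have "\<dots> = x" using x by (simp add: pow_order_eq_1)
    finally show ?thesis .
  qed
  fix x y assume "x \<in> carrier G" "y \<in> carrier G" "x \<otimes> x = y \<otimes> y"
  then show "x = y" using root by metis
qed

lemma distance_antimagic_if_weights_are_squares:
  assumes "group A" "odd (order A)" "bij_betw f V (carrier A)"
    and "\<And>x. x \<in> V \<Longrightarrow> dist_weight A V E f x = f x \<otimes>\<^bsub>A\<^esub> f x"
  shows "distance_antimagic A V E"
proof -
  have "inj_on ((\<lambda>a. a \<otimes>\<^bsub>A\<^esub> a) \<circ> f) V"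
    using assms(3) group.inj_on_square_if_odd_order[OF assms(1,2)]
    by (auto simp: bij_betw_def intro: comp_inj_on)
  then have "inj_on (dist_weight A V E f) V"
    using assms(4) by (simp add: inj_on_def)
  then show ?thesis
    using assms(3) by (auto simp: distance_antimagic_def distance_antimagic_labelling_def)
qed

lemma finprod_integer_mod_group:
  assumes "finite A" "h \<in> A \<rightarrow> carrier (integer_mod_group n)"
  shows "finprod (integer_mod_group n) h A = (\<Sum>a\<in>A. h a) mod int n"
  using assms
proof (induction A rule: finite_induct)
  case empty
  interpret comm_group "integer_mod_group n" by simp
  show ?case by simp
next
  case (insert a F)
  interpret comm_group "integer_mod_group n" by simp
  have "finprod (integer_mod_group n) h (insert a F) = (h a + (\<Sum>a\<in>F. h a) mod int n) mod int n"
    using insert by (subst finprod_insert) auto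
  also have "\<dots> = (\<Sum>a\<in>insert a F. h a) mod int n"
    using insert by (simp add: mod_add_right_eq)
  finally show ?case .
qed

lemma order_integer_mod_group: "n > 0 \<Longrightarrow> order (integer_mod_group n) = n"
  by (simp add: order_def carrier_integer_mod_group)

lemma order_product_group:
  "finite I \<Longrightarrow> order (product_group I G) = (\<Prod>i\<in>I. order (G i))"
  by (simp add: order_def card_PiE)

lemma comm_group_product_group:
  assumes "\<And>i. i \<in> I \<Longrightarrow> comm_group (G i)"
  shows "comm_group (product_group I G)"
proof (rule group.group_comm_groupI)
  show "group (product_group I G)"
    using assms by (simp add: comm_group.axioms(2))
next
  fix x y assume "x \<in> carrier (product_group I G)" "y \<in> carrier (product_group I G)"
  then show "x \<otimes>\<^bsub>product_group I G\<^esub> y = y \<otimes>\<^bsub>product_group I G\<^esub> x"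
    using assms by (auto intro!: restrict_ext simp: PiE_iff comm_monoid.m_comm comm_group_def)
qed

lemma finprod_product_group:
  assumes G: "\<And>i. i \<in> I \<Longrightarrow> comm_group (G i)" and "finite A"
    and "h \<in> A \<rightarrow> carrier (product_group I G)"
  shows "finprod (product_group I G) h A = (\<lambda>j\<in>I. finprod (G j) (\<lambda>a. h a j) A)"
  using assms(2,3)
proof (induction A rule: finite_induct)
  case empty
  interpret comm_group "product_group I G" using comm_group_product_group G by blast
  show ?case
    using G by (auto intro!: restrict_ext simp: comm_group.axioms(1) comm_monoid.finprod_empty)
next
  case (insert a F)
  interpret comm_group "product_group I G" using comm_group_product_group G by blast
  have "finprod (product_group I G) h (insert a F)
      = (\<lambda>j\<in>I. h a j \<otimes>\<^bsub>G j\<^esub> finprod (G j) (\<lambda>a. h a j) F)"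
    using insert by (auto intro!: restrict_ext)
  also have "\<dots> = (\<lambda>j\<in>I. finprod (G j) (\<lambda>a. h a j) (insert a F))"
    using insert G by (auto intro!: restrict_ext simp: comm_group.axioms(1) comm_monoid.finprod_insert PiE_iff Pi_iff)
  finally show ?case .
qed

lemma bij_betw_restrict_PiE:
  assumes "\<And>i. i \<in> I \<Longrightarrow> bij_betw (g i) (A i) (B i)"
  shows "bij_betw (\<lambda>x. \<lambda>i\<in>I. g i (x i)) (\<Pi>\<^sub>E i\<in>I. A i) (\<Pi>\<^sub>E i\<in>I. B i)"
proof (rule bij_betw_byWitness[where f' = "\<lambda>z. \<lambda>i\<in>I. inv_into (A i) (g i) (z i)"])
  show "\<forall>x\<in>\<Pi>\<^sub>E i\<in>I. A i. (\<lambda>i\<in>I. inv_into (A i) (g i) ((\<lambda>i\<in>I. g i (x i)) i)) = x"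
    using assms by (auto simp: bij_betw_def PiE_iff extensional_def fun_eq_iff)
  show "\<forall>z\<in>\<Pi>\<^sub>E i\<in>I. B i. (\<lambda>i\<in>I. g i ((\<lambda>i\<in>I. inv_into (A i) (g i) (z i)) i)) = z"
    using assms by (auto simp: bij_betw_def PiE_iff extensional_def fun_eq_iff f_inv_into_f)
  show "(\<lambda>x. \<lambda>i\<in>I. g i (x i)) ` (\<Pi>\<^sub>E i\<in>I. A i) \<subseteq> (\<Pi>\<^sub>E i\<in>I. B i)"
    using assms by (auto simp: PiE_iff) (metis bij_betw_apply)
  show "(\<lambda>z. \<lambda>i\<in>I. inv_into (A i) (g i) (z i)) ` (\<Pi>\<^sub>E i\<in>I. B i) \<subseteq> (\<Pi>\<^sub>E i\<in>I. A i)"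
    using assms by (auto simp: bij_betw_def PiE_iff) (metis inv_into_into)
qed

lemma open_nbhd_cart:
  assumes "x \<in> cart_V I V"
  shows "open_nbhd (cart_V I V) (cart_E I E) x = (\<Union>i\<in>I. (\<lambda>v. x(i := v)) ` open_nbhd (V i) (E i) (x i))"
proof (intro equalityI subsetI)
  fix y assume "y \<in> open_nbhd (cart_V I V) (cart_E I E) x"
  then obtain i where y: "y \<in> cart_V I V" and i: "i \<in> I" and "E i (x i) (y i)"
    and others: "\<forall>j\<in>I. j \<noteq> i \<longrightarrow> x j = y j"
    by (auto simp: open_nbhd_def cart_E_def)
  moreover have "y = x(i := y i)"
    using assms y others by (auto simp: cart_V_def PiE_iff extensional_def fun_eq_iff)
  ultimately show "y \<in> (\<Union>i\<in>I. (\<lambda>v. x(i := v)) ` open_nbhd (V i) (E i) (x i))"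
    by (auto simp: open_nbhd_def cart_V_def)
next
  fix y assume "y \<in> (\<Union>i\<in>I. (\<lambda>v. x(i := v)) ` open_nbhd (V i) (E i) (x i))"
  then show "y \<in> open_nbhd (cart_V I V) (cart_E I E) x"
    using assms by (auto simp: open_nbhd_def cart_V_def cart_E_def)
qed

lemma disjoint_family_on_cart_nbhd:
  assumes "\<And>i v. i \<in> I \<Longrightarrow> \<not> E i v v"
  shows "disjoint_family_on (\<lambda>i. (\<lambda>v. x(i := v)) ` open_nbhd (V i) (E i) (x i)) I"
  using assms by (auto simp: disjoint_family_on_def open_nbhd_def) (metis fun_upd_same fun_upd_other)

lemma sum_open_nbhd_cart:
  assumes "finite I" "\<And>i v. i \<in> I \<Longrightarrow> \<not> E i v v"
    and "\<And>i. i \<in> I \<Longrightarrow> finite (open_nbhd (V i) (E i) (x i))"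
    and x: "x \<in> cart_V I V"
  shows "(\<Sum>y\<in>open_nbhd (cart_V I V) (cart_E I E) x. g y)
       = (\<Sum>i\<in>I. \<Sum>v\<in>open_nbhd (V i) (E i) (x i). g (x(i := v)))"
proof -
  have "(\<Sum>y\<in>open_nbhd (cart_V I V) (cart_E I E) x. g y)
      = (\<Sum>i\<in>I. \<Sum>y\<in>(\<lambda>v. x(i := v)) ` open_nbhd (V i) (E i) (x i). g y)"
    unfolding open_nbhd_cart[OF x]
    using assms(1,3) disjoint_family_on_cart_nbhd[where I = I and E = E and x = x and V = V] assms(2)
    by (intro sum.UNION_disjoint) (auto simp: disjoint_family_on_def)
  also have "\<dots> = (\<Sum>i\<in>I. \<Sum>v\<in>open_nbhd (V i) (E i) (x i). g (x(i := v)))"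
  proof (intro sum.cong refl)
    fix i
    have "inj (\<lambda>v. x(i := v))" by (rule injI) (metis fun_upd_same)
    then show "(\<Sum>y\<in>(\<lambda>v. x(i := v)) ` open_nbhd (V i) (E i) (x i). g y)
        = (\<Sum>v\<in>open_nbhd (V i) (E i) (x i). g (x(i := v)))"
      by (simp add: sum.reindex inj_on_subset)
  qed
  finally show ?thesis .
qed

lemma cycle_E_irrefl:
  assumes "2 \<le> n" shows "\<not> cycle_E n i i"
proof
  assume "cycle_E n i i"
  then have i: "i = (i + 1) mod n" by (simp add: cycle_E_def)
  then have "i < n" using assms by (metis mod_less_divisor not_numeral_le_zero not_gr_zero)
  show False
  proof (cases "i + 1 = n")
    case True
    then show False using i assms by simp
  next
    case False
    then show False using i \<open>i < n\<close> by simp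
  qed
qed

lemma cycle_pred_iff:
  fixes i j n :: nat
  assumes "i < n" "j < n"
  shows "i = (j + 1) mod n \<longleftrightarrow> j = (i + n - 1) mod n"
  using assms by (cases "i = 0"; cases "j + 1 = n") (auto simp: mod_if)

lemma cycle_succ_ne_pred:
  fixes i n :: nat
  assumes "3 \<le> n" "i < n"
  shows "(i + 1) mod n \<noteq> (i + n - 1) mod n"
  using assms by (auto simp: mod_if)

lemma open_nbhd_cycle:
  assumes "i < n"
  shows "open_nbhd (cycle_V n) (cycle_E n) i = {(i + 1) mod n, (i + n - 1) mod n}"
proof -
  have "open_nbhd (cycle_V n) (cycle_E n) i = {j. j < n \<and> (j = (i + 1) mod n \<or> i = (j + 1) mod n)}"
    by (auto simp: open_nbhd_def cycle_V_def cycle_E_def)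
  also have "\<dots> = {j. j < n \<and> (j = (i + 1) mod n \<or> j = (i + n - 1) mod n)}"
    using cycle_pred_iff[OF assms] by blast
  also have "\<dots> = {(i + 1) mod n, (i + n - 1) mod n}"
    using assms by auto
  finally show ?thesis .
qed

lemma card_open_nbhd_cycle:
  "3 \<le> n \<Longrightarrow> i < n \<Longrightarrow> card (open_nbhd (cycle_V n) (cycle_E n) i) = 2"
  using cycle_succ_ne_pred by (simp add: open_nbhd_cycle)

lemma sum_open_nbhd_cycle:
  assumes "3 \<le> n" "i < n"
  shows "(\<Sum>j\<in>open_nbhd (cycle_V n) (cycle_E n) i. int j) mod int n = (2 * int i) mod int n"
proof -
  have "(\<Sum>j\<in>open_nbhd (cycle_V n) (cycle_E n) i. int j) = int ((i + 1) mod n) + int ((i + n - 1) mod n)"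
    using assms cycle_succ_ne_pred[OF assms] by (simp add: open_nbhd_cycle)
  also have "\<dots> mod int n = ((int i + 1) + (int i + int n - 1)) mod int n"
    using assms by (simp add: zmod_int mod_add_eq)
  also have "\<dots> = (2 * int i) mod int n"
    by (simp add: algebra_simps)
  finally show ?thesis .
qed

lemma bij_betw_int_cycle_V:
  "0 < n \<Longrightarrow> bij_betw int (cycle_V n) (carrier (integer_mod_group n))"
  by (simp add: bij_betw_def cycle_V_def carrier_integer_mod_group lessThan_atLeast0 image_int_atLeastLessThan)

theorem distance_antimagic_cycle:
  assumes "odd n" "3 \<le> n"
  shows "distance_antimagic (integer_mod_group n) (cycle_V n) (cycle_E n)"
proof (rule distance_antimagic_if_weights_are_squares)
  show "odd (order (integer_mod_group n))"
    using assms by (simp add: order_integer_mod_group)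
  show "bij_betw int (cycle_V n) (carrier (integer_mod_group n))"
    using assms by (intro bij_betw_int_cycle_V) simp
  fix i assume "i \<in> cycle_V n"
  then have i: "i < n" by (simp add: cycle_V_def)
  have "dist_weight (integer_mod_group n) (cycle_V n) (cycle_E n) int i
      = (\<Sum>j\<in>open_nbhd (cycle_V n) (cycle_E n) i. int j) mod int n"
    unfolding dist_weight_def using assms i
    by (intro finprod_integer_mod_group) (auto simp: open_nbhd_cycle carrier_integer_mod_group)
  also have "\<dots> = int i \<otimes>\<^bsub>integer_mod_group n\<^esub> int i"
    using sum_open_nbhd_cycle[OF assms(2) i] by simp
  finally show "dist_weight (integer_mod_group n) (cycle_V n) (cycle_E n) int i = int i \<otimes>\<^bsub>integer_mod_group n\<^esub> int i" .
qed simp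

lemma mult_mod_eq_if_dvd_pred:
  fixes a :: int
  assumes "m dvd k - 1" "1 \<le> k"
  shows "(int k * a) mod int m = a mod int m"
proof -
  obtain c where "k = m * c + 1" using assms by (metis dvdE le_add_diff_inverse2)
  then have "int k * a = a + int m * (int c * a)" by (simp add: algebra_simps)
  then show ?thesis by simp
qed

lemma sum_open_nbhd_cart_cycles:
  assumes "finite I" "\<And>i. i \<in> I \<Longrightarrow> 3 \<le> n i"
    and x: "x \<in> cart_V I (\<lambda>i. cycle_V (n i))" and j: "j \<in> I"
  shows "(\<Sum>y\<in>open_nbhd (cart_V I (\<lambda>i. cycle_V (n i))) (cart_E I (\<lambda>i. cycle_E (n i))) x. int (y j)) mod int (n j)
       = (int (card I) * (2 * int (x j))) mod int (n j)"
proof -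
  let ?N = "\<lambda>i. open_nbhd (cycle_V (n i)) (cycle_E (n i)) (x i)"
  have x_less: "x i < n i" if "i \<in> I" for i
    using x that by (auto simp: cart_V_def cycle_V_def)
  have "(\<Sum>y\<in>open_nbhd (cart_V I (\<lambda>i. cycle_V (n i))) (cart_E I (\<lambda>i. cycle_E (n i))) x. int (y j))
      = (\<Sum>i\<in>I. \<Sum>v\<in>?N i. int ((x(i := v)) j))"
  proof (rule sum_open_nbhd_cart[OF assms(1) _ _ x])
    show "\<not> cycle_E (n i) v v" if "i \<in> I" for i v
      using assms(2)[OF that] by (intro cycle_E_irrefl) simp
    show "finite (?N i)" if "i \<in> I" for i
      using x_less[OF that] by (simp add: open_nbhd_cycle)
  qed
  then have "(\<Sum>y\<in>open_nbhd (cart_V I (\<lambda>i. cycle_V (n i))) (cart_E I (\<lambda>i. cycle_E (n i))) x. int (y j)) mod int (n j)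
      = (\<Sum>i\<in>I. (\<Sum>v\<in>?N i. int ((x(i := v)) j)) mod int (n j)) mod int (n j)"
    by (simp add: mod_sum_eq)
  also have "\<dots> = (\<Sum>i\<in>I. (2 * int (x j)) mod int (n j)) mod int (n j)"
  proof (rule arg_cong[where f = "\<lambda>s. s mod int (n j)"], rule sum.cong[OF refl])
    fix i assume i: "i \<in> I"
    show "(\<Sum>v\<in>?N i. int ((x(i := v)) j)) mod int (n j) = (2 * int (x j)) mod int (n j)"
    proof (cases "i = j")
      case True
      then show ?thesis using sum_open_nbhd_cycle assms(2) x_less i by simp
    next
      case False
      then show ?thesis using card_open_nbhd_cycle assms(2) x_less i by simp
    qed
  qed
  also have "\<dots> = (int (card I) * (2 * int (x j))) mod int (n j)"
    by (simp add: mod_mult_right_eq)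
  finally show ?thesis .
qed

lemma dist_weight_cart_cycles:
  assumes "finite I" and n: "\<And>i. i \<in> I \<Longrightarrow> 3 \<le> n i"
    and x: "x \<in> cart_V I (\<lambda>i. cycle_V (n i))"
  shows "dist_weight (product_group I (\<lambda>i. integer_mod_group (n i)))
           (cart_V I (\<lambda>i. cycle_V (n i))) (cart_E I (\<lambda>i. cycle_E (n i))) (\<lambda>x. \<lambda>i\<in>I. int (x i)) x
       = (\<lambda>j\<in>I. (int (card I) * (2 * int (x j))) mod int (n j))"
  (is "dist_weight ?G ?V ?E ?f x = _")
proof -
  let ?N = "open_nbhd ?V ?E x"
  have N: "finite ?N" "?N \<subseteq> ?V"
    using assms(1) by (auto simp: open_nbhd_def cart_V_def cycle_V_def finite_PiE)
  have label: "int (y j) \<in> carrier (integer_mod_group (n j))" if "y \<in> ?N" "j \<in> I" for y j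
    using that N(2) by (auto simp: cart_V_def cycle_V_def carrier_integer_mod_group)
  have "dist_weight ?G ?V ?E ?f x = (\<lambda>j\<in>I. finprod (integer_mod_group (n j)) (\<lambda>y. int (y j)) ?N)"
    unfolding dist_weight_def
    using N(1) label by (subst finprod_product_group) (auto intro!: restrict_ext)
  also have "\<dots> = (\<lambda>j\<in>I. (\<Sum>y\<in>?N. int (y j)) mod int (n j))"
    using N(1) label by (intro restrict_ext finprod_integer_mod_group) auto
  also have "\<dots> = (\<lambda>j\<in>I. (int (card I) * (2 * int (x j))) mod int (n j))"
    using sum_open_nbhd_cart_cycles[OF assms(1) n x] by (intro restrict_ext) simp
  finally show ?thesis .
qed

theorem distance_antimagic_cart_cycles:
  assumes "finite I" and n: "\<And>i. i \<in> I \<Longrightarrow> odd (n i) \<and> 3 \<le> n i \<and> n i dvd card I - 1"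
  shows "distance_antimagic (product_group I (\<lambda>i. integer_mod_group (n i)))
           (cart_V I (\<lambda>i. cycle_V (n i))) (cart_E I (\<lambda>i. cycle_E (n i)))"
  (is "distance_antimagic ?G ?V ?E")
proof (rule distance_antimagic_if_weights_are_squares)
  let ?f = "\<lambda>x. \<lambda>i\<in>I. int (x i)"
  have n_pos: "0 < n i" if "i \<in> I" for i
    using n[OF that] by simp
  show "group ?G" by simp
  have "order ?G = (\<Prod>i\<in>I. n i)"
    using assms(1) n_pos by (simp add: order_product_group order_integer_mod_group)
  then show "odd (order ?G)"
    using assms by (simp add: even_prod_iff)
  show "bij_betw ?f ?V (carrier ?G)"
    unfolding cart_V_def carrier_product_group
    using n_pos by (intro bij_betw_restrict_PiE bij_betw_int_cycle_V)
  fix x assume x: "x \<in> ?V"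
  have "(int (card I) * (2 * int (x j))) mod int (n j) = (int (x j) + int (x j)) mod int (n j)"
    if j: "j \<in> I" for j
  proof -
    have "1 \<le> card I"
      using assms(1) j by (simp add: Suc_le_eq card_gt_0_iff) blast
    then show ?thesis
      using n[OF j] by (simp add: mult_mod_eq_if_dvd_pred)
  qed
  then show "dist_weight ?G ?V ?E ?f x = ?f x \<otimes>\<^bsub>?G\<^esub> ?f x"
    using dist_weight_cart_cycles[OF assms(1) _ x] n by (auto intro!: restrict_ext)
qed

theorem mainTheorem9:
  shows "(\<forall>n::nat. odd n \<and> n \<ge> 3 \<longrightarrow>
            distance_antimagic (integer_mod_group n) (cycle_V n) (cycle_E n))
       \<and> (\<forall>(k::nat) (n::nat \<Rightarrow> nat). k \<ge> 2 \<and> (\<forall>i<k. odd (n i) \<and> n i \<ge> 3 \<and> n i dvd (k - 1)) \<longrightarrow>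
            distance_antimagic (product_group {..<k} (\<lambda>i. integer_mod_group (n i)))
              (cart_V {..<k} (\<lambda>i. cycle_V (n i))) (cart_E {..<k} (\<lambda>i. cycle_E (n i))))
       \<and> (\<forall>(p::nat) (d::nat). Factorial_Ring.prime p \<and> odd p \<and> d \<ge> 1 \<longrightarrow>
            distance_antimagic (product_group {..<p * d + 1} (\<lambda>i. integer_mod_group p))
              (cart_V {..<p * d + 1} (\<lambda>i. cycle_V p)) (cart_E {..<p * d + 1} (\<lambda>i. cycle_E p)))"
proof (intro conjI allI impI)
  show "distance_antimagic (integer_mod_group n) (cycle_V n) (cycle_E n)"
    if "odd n \<and> n \<ge> 3" for n
    using that distance_antimagic_cycle by blast
  show "distance_antimagic (product_group {..<k} (\<lambda>i. integer_mod_group (n i)))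
          (cart_V {..<k} (\<lambda>i. cycle_V (n i))) (cart_E {..<k} (\<lambda>i. cycle_E (n i)))"
    if "k \<ge> 2 \<and> (\<forall>i<k. odd (n i) \<and> n i \<ge> 3 \<and> n i dvd (k - 1))" for k and n :: "nat \<Rightarrow> nat"
    using that by (intro distance_antimagic_cart_cycles) auto
  show "distance_antimagic (product_group {..<p * d + 1} (\<lambda>i. integer_mod_group p))
          (cart_V {..<p * d + 1} (\<lambda>i. cycle_V p)) (cart_E {..<p * d + 1} (\<lambda>i. cycle_E p))"
    if "Factorial_Ring.prime p \<and> odd p \<and> d \<ge> 1" for p d :: nat
  proof (intro distance_antimagic_cart_cycles)
    have "p \<noteq> 2" "2 \<le> p" using that prime_ge_2_nat by auto
    then show "odd p \<and> 3 \<le> p \<and> p dvd card {..<p * d + 1} - 1"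
      using that by simp
  qed simp
qed
end
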